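(* Let $q$ be a prime power, $n$ a positive integer, $L(x)=\sum_{i=0}^{n-1}a_ix^{q^{2i}}$ with $a_i\in\mathbb F_{q^{2n}}$. For $c\in\mathbb F_{q^2}$ let $N_c$ be the number of $u\in\mathbb F_{q^{2n}}$ with $\mathrm{Tr}(uL(u^q))+c=0$. Then \[N_0=q^{2(n-1)}+(q-1)q^{2(n-1)}\sum_{\upsilon\in U}(-q)^{-R(\upsilon)}\] and, for $c\in\mathbb F_{q^2}^*$, \[N_c=q^{2(n-1)}+q^{2n-1}(-q)^{-R(-c^{1-q})}-q^{2(n-1)}\sum_{\upsilon\in U}(-q)^{-R(\upsilon)}.\]
   Context: $\mathrm{Tr}$ is the trace $\mathbb F_{q^{2n}}\to\mathbb F_{q^2}$. $L^*(x)=\sum_{i=0}^{n-1}(a_i^qx)^{q^{2(n-i-1)}}$. $U$ is the subgroup of order $q+1$ of $\mathbb F_{q^2}^*$, and for $\upsilon\in U$, $R(\upsilon)=n-\dim\ker(\upsilon L^*+L)$, where the kernel is that of the induced $\mathbb F_{q^2}$-linear map on $\mathbb F_{q^{2n}}$ and the dimension is over $\mathbb F_{q^2}$. *)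

theory Defs
  imports Complex_Main "HOL-Computational_Algebra.Primes"
begin

text \<open>The ambient field 'a is a finite field of order q^(2n), playing the role of F_{q^{2n}}.
  The subfield F_{q^2} is the set of fixed points of x \<mapsto> x^(q^2).\<close>

definition Fq2 :: "nat \<Rightarrow> ('a::{field,finite}) set" where
  "Fq2 q = {x. x ^ (q^2) = x}"

definition Tr :: "nat \<Rightarrow> nat \<Rightarrow> 'a::{field,finite} \<Rightarrow> 'a" where
  "Tr q n x = (\<Sum>j<n. x ^ (q ^ (2*j)))"

definition linL :: "nat \<Rightarrow> nat \<Rightarrow> (nat \<Rightarrow> 'a::{field,finite}) \<Rightarrow> 'a \<Rightarrow> 'a" where
  "linL q n a x = (\<Sum>i<n. a i * x ^ (q ^ (2*i)))"

definition linLstar :: "nat \<Rightarrow> nat \<Rightarrow> (nat \<Rightarrow> 'a::{field,finite}) \<Rightarrow> 'a \<Rightarrow> 'a" where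
  "linLstar q n a x = (\<Sum>i<n. (a i ^ q * x) ^ (q ^ (2*(n-i-1))))"

text \<open>Subgroup of order q+1 of F_{q^2}^*.\<close>
definition Uset :: "nat \<Rightarrow> ('a::{field,finite}) set" where
  "Uset q = {v. v ^ (q+1) = 1}"

definition sub_span :: "'a::field set \<Rightarrow> 'a set \<Rightarrow> 'a set" where
  "sub_span F B = {y. \<exists>c. (\<forall>b\<in>B. c b \<in> F) \<and> y = (\<Sum>b\<in>B. c b * b)}"

definition sub_indep :: "'a::field set \<Rightarrow> 'a set \<Rightarrow> bool" where
  "sub_indep F B = (\<forall>c. (\<forall>b\<in>B. c b \<in> F) \<and> (\<Sum>b\<in>B. c b * b) = 0 \<longrightarrow> (\<forall>b\<in>B. c b = 0))"

definition sub_basis :: "'a::field set \<Rightarrow> 'a set \<Rightarrow> 'a set \<Rightarrow> bool" where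
  "sub_basis F V B = (finite B \<and> B \<subseteq> V \<and> sub_indep F B \<and> sub_span F B = V)"

definition dim_over :: "'a::field set \<Rightarrow> 'a set \<Rightarrow> nat" where
  "dim_over F V = card (SOME B. sub_basis F V B)"

definition Rk :: "nat \<Rightarrow> nat \<Rightarrow> (nat \<Rightarrow> 'a::{field,finite}) \<Rightarrow> 'a \<Rightarrow> nat" where
  "Rk q n a v = n - dim_over (Fq2 q) {x. v * linLstar q n a x + linL q n a x = 0}"

definition Ncount :: "nat \<Rightarrow> nat \<Rightarrow> (nat \<Rightarrow> 'a::{field,finite}) \<Rightarrow> 'a \<Rightarrow> nat" where
  "Ncount q n a c = card {u. Tr q n (u * linL q n a (u ^ q)) + c = 0}"

end

theory Submission
  imports Defs "HOL-Number_Theory.Residues" "HOL-Computational_Algebra.Polynomial"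
begin

(*
  For v in U, the form g_v(u, w) = Tr(u (v L*(w^q) + L(w^q))) on F_{q^(2n)} is F_{q^2}-linear in u
  and satisfies g_v(w, u) = v g_v(u, w)^q, because L* is adjoint to L with respect to the trace.
  Splitting off anisotropic vectors one at a time shows that on a space V whose radical has
  codimension r over F_{q^2}, the number of u with g_v(u, u) = t, for t = v t^q, is
  |V| (1 + (q - 1)(-q)^(-r)) / q when t = 0 and |V| (1 - (-q)^(-r)) / q otherwise.
  The radical of g_v is the Frobenius preimage of ker(v L* + L), so r = R(v).

  Put x = Tr(u L(u^q)) + c. Then g_v(u, u) = -(c + v c^q) exactly when x + v x^q = 0, and for
  x in F_{q^2} this equation has q + 1 solutions v in U if x = 0 and exactly one otherwise.
  Summing the counts over v in U therefore gives q^(2n) + q N_c, and both formulas follow.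
*)

lemma card_eq_card_kernel_mult_card_image:
  fixes f :: "'b::ab_group_add \<Rightarrow> 'c::ab_group_add"
  assumes "finite A"
    and diff_closed: "\<And>x y. x \<in> A \<Longrightarrow> y \<in> A \<Longrightarrow> x - y \<in> A"
    and additive: "\<And>x y. x \<in> A \<Longrightarrow> y \<in> A \<Longrightarrow> f (x - y) = f x - f y"
  shows "card A = card {x\<in>A. f x = 0} * card (f ` A)"
proof -
  have fiber: "card {x\<in>A. f x = f x0} = card {x\<in>A. f x = 0}" if x0: "x0 \<in> A" for x0
  proof -
    have minus_closed: "- z \<in> A" if "z \<in> A" for z
      using diff_closed[OF diff_closed[OF x0 x0] that] by simp
    have plus_closed: "z + x0 \<in> A" if "z \<in> A" for z
      using diff_closed[OF x0 minus_closed[OF that]] by (simp add: add.commute)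
    have "bij_betw (\<lambda>x. x - x0) {x\<in>A. f x = f x0} {x\<in>A. f x = 0}"
    proof (rule bij_betwI[where g = "\<lambda>z. z + x0"])
      show "(\<lambda>z. z + x0) \<in> {x\<in>A. f x = 0} \<rightarrow> {x\<in>A. f x = f x0}"
        using plus_closed additive[OF plus_closed x0] by auto
    qed (use diff_closed additive x0 in auto)
    then show ?thesis
      by (rule bij_betw_same_card)
  qed
  have partition: "A = (\<Union>y\<in>f ` A. {x\<in>A. f x = y})"
    by auto
  have "card A = (\<Sum>y\<in>f ` A. card {x\<in>A. f x = y})"
    by (subst partition, rule card_UN_disjoint) (use \<open>finite A\<close> in auto)
  also have "\<dots> = (\<Sum>y\<in>f ` A. card {x\<in>A. f x = 0})"
    using fiber by (intro sum.cong) auto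
  finally show ?thesis
    by simp
qed

lemma card_le_degree_if_poly_roots:
  fixes p :: "'a::idom poly"
  assumes "p \<noteq> 0" and "\<And>x. x \<in> S \<Longrightarrow> poly p x = 0"
  shows "card S \<le> degree p"
proof -
  have "card S \<le> card {x. poly p x = 0}"
    using assms by (intro card_mono poly_roots_finite) auto
  also have "\<dots> \<le> degree p"
    using assms(1) by (rule card_poly_roots_bound)
  finally show ?thesis .
qed

lemma card_le_if_trinomial_roots:
  fixes S :: "'a::idom set"
  assumes "1 < m" and "\<And>x. x \<in> S \<Longrightarrow> x ^ m + b * x + c = 0"
  shows "card S \<le> m"
proof -
  define p where "p = monom 1 m + [:c, b:]"
  have "coeff p m = 1"
    using assms(1) by (simp add: p_def coeff_pCons split: nat.split)
  then have "p \<noteq> 0"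
    by auto
  moreover have "degree p \<le> m"
    unfolding p_def using assms(1) by (intro degree_add_le) (auto simp: degree_monom_le)
  moreover have "poly p x = x ^ m + b * x + c" for x
    by (simp add: p_def poly_monom algebra_simps)
  ultimately show ?thesis
    using card_le_degree_if_poly_roots[of p S] assms(2) by (metis order.trans)
qed

lemma power_int_minus_neg: "(- x) powi (- int r) = (-1 / x) ^ r" for x :: "'a::field"
  by (simp add: power_int_minus inverse_eq_divide flip: power_one_over)

lemma CHAR_eq_if_card_eq_prime_power:
  assumes "prime p" and "card (UNIV :: 'a::{field,finite} set) = p ^ m"
  shows "CHAR('a) = p"
proof -
  have "prime CHAR('a)"
    by (simp add: prime_CHAR_semidom finite_imp_CHAR_pos)
  moreover have "CHAR('a) dvd p ^ m"
    using CHAR_dvd_CARD[where 'a = 'a] assms(2) by simp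
  ultimately show ?thesis
    using assms(1) prime_dvd_power primes_dvd_imp_eq by blast
qed

section \<open>Frobenius, trace and the subfield \<open>F_{q^2}\<close>\<close>

locale q2n_field =
  fixes q n :: nat
  assumes q_CHAR_power: "\<exists>k>0. q = CHAR('a::{field,finite}) ^ k"
    and n_pos: "n > 0"
    and card_UNIV: "card (UNIV :: 'a set) = q ^ (2*n)"
begin

lemma prime_CHAR: "prime CHAR('a)"
  by (simp add: prime_CHAR_semidom finite_imp_CHAR_pos)

lemma q_ge_2: "q \<ge> 2"
proof -
  obtain k where "k > 0" "q = CHAR('a) ^ k"
    using q_CHAR_power by auto
  then have "CHAR('a) \<le> q"
    using prime_gt_0_nat[OF prime_CHAR] by (simp add: self_le_power)
  then show ?thesis
    using prime_ge_2_nat[OF prime_CHAR] by simp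
qed

lemma q_pos: "q > 0"
  using q_ge_2 by simp

lemma frob_add: "((x::'a) + y) ^ (q ^ j) = x ^ (q ^ j) + y ^ (q ^ j)"
proof -
  obtain k where "q = CHAR('a) ^ k"
    using q_CHAR_power by auto
  then show ?thesis
    by (intro freshmans_dream'[OF prime_CHAR, of _ "k*j"]) (simp add: power_mult)
qed

lemma frob_sum: "(sum (f::'b \<Rightarrow> 'a) A) ^ (q ^ j) = (\<Sum>i\<in>A. f i ^ (q ^ j))"
proof -
  obtain k where "q = CHAR('a) ^ k"
    using q_CHAR_power by auto
  then show ?thesis
    by (intro freshmans_dream_sum'[OF prime_CHAR, of _ "k*j"]) (simp add: power_mult)
qed

lemma frob_minus: "(- (x::'a)) ^ (q ^ j) = - (x ^ (q ^ j))"
proof -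
  have "x ^ (q ^ j) + (- x) ^ (q ^ j) = 0"
    using frob_add[of x "- x" j] q_pos by (simp add: power_0_left)
  then show ?thesis
    by (simp add: eq_neg_iff_add_eq_0 add.commute)
qed

lemma frob_diff: "((x::'a) - y) ^ (q ^ j) = x ^ (q ^ j) - y ^ (q ^ j)"
  using frob_add[of x "- y" j] by (simp add: frob_minus)

lemma frob_inj: "(x::'a) ^ (q ^ j) = y ^ (q ^ j) \<Longrightarrow> x = y"
  using frob_diff[of x y j] q_pos by simp

lemmas frob1_add = frob_add[where j = 1, simplified]
  and frob1_sum = frob_sum[where j = 1, simplified]
  and frob1_minus = frob_minus[where j = 1, simplified]
  and frob1_diff = frob_diff[where j = 1, simplified]
  and frob1_inj = frob_inj[where j = 1, simplified]

lemma power_q_power_power_q_power: "((x::'a) ^ (q ^ i)) ^ (q ^ j) = x ^ (q ^ (i + j))"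
  by (simp add: power_mult[symmetric] power_add)

text \<open>The library's \<open>finite_field_power_card_eq_same\<close> is stated for sort \<open>finite_field\<close>,
  which a type variable of sort \<open>{field, finite}\<close> does not carry; this is the same product
  argument.\<close>

lemma power_q_2n: "(x::'a) ^ (q ^ (2*n)) = x"
proof (cases "x = 0")
  case False
  let ?U = "UNIV - {0::'a}"
  have "(\<Prod>y\<in>?U. x * y) = (\<Prod>y\<in>?U. y)"
    by (rule prod.reindex_bij_witness[of _ "\<lambda>y. y / x" "\<lambda>y. x * y"]) (use False in auto)
  moreover have "(\<Prod>y\<in>?U. x * y) = x ^ card ?U * (\<Prod>y\<in>?U. y)"
    by (simp add: prod.distrib)
  moreover have "(\<Prod>y\<in>?U. y) \<noteq> 0"
    by simp
  ultimately have "x ^ card ?U = 1"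
    by simp
  moreover have "card ?U + 1 = q ^ (2*n)"
    using card_UNIV q_pos by (simp add: card_Diff_singleton)
  ultimately show ?thesis
    by (metis power_Suc2 mult_1 Suc_eq_plus1)
qed (use q_pos in simp)

abbreviation K :: "'a set" where "K \<equiv> Fq2 q"

lemma K_iff: "x \<in> K \<longleftrightarrow> x ^ (q^2) = x"
  by (simp add: Fq2_def)

lemma K_power_q_power: "x \<in> K \<Longrightarrow> x ^ (q ^ (2*i)) = x"
proof (induction i)
  case (Suc i)
  have "x ^ (q ^ (2 * Suc i)) = (x ^ (q ^ (2*i))) ^ (q^2)"
    using power_q_power_power_q_power[of x "2*i" 2] by simp
  then show ?case
    using Suc K_iff by simp
qed simp

lemma K_0 [simp]: "0 \<in> K"
  and K_1 [simp]: "1 \<in> K"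
  using q_pos by (simp_all add: K_iff)

lemma K_add: "x \<in> K \<Longrightarrow> y \<in> K \<Longrightarrow> x + y \<in> K"
  using frob_add[of x y 2] by (simp add: K_iff)

lemma K_minus: "x \<in> K \<Longrightarrow> - x \<in> K"
  using frob_minus[of x 2] by (simp add: K_iff)

lemma K_diff: "x \<in> K \<Longrightarrow> y \<in> K \<Longrightarrow> x - y \<in> K"
  using frob_diff[of x y 2] by (simp add: K_iff)

lemma K_mult: "x \<in> K \<Longrightarrow> y \<in> K \<Longrightarrow> x * y \<in> K"
  by (simp add: K_iff power_mult_distrib)

lemma K_divide: "x \<in> K \<Longrightarrow> y \<in> K \<Longrightarrow> x / y \<in> K"
  by (simp add: K_iff power_divide)

lemma K_power: "x \<in> K \<Longrightarrow> x ^ m \<in> K"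
  by (metis K_iff mult.commute power_mult)

lemma Tr_0 [simp]: "Tr q n (0::'a) = 0"
  using q_pos by (simp add: Tr_def power_0_left)

lemma Tr_add: "Tr q n (x + y) = Tr q n x + Tr q n (y::'a)"
  by (simp add: Tr_def frob_add sum.distrib)

lemma Tr_diff: "Tr q n (x - y) = Tr q n x - Tr q n (y::'a)"
  by (simp add: Tr_def frob_diff sum_subtractf)

lemma Tr_sum: "Tr q n (sum f A) = (\<Sum>i\<in>A. Tr q n (f i :: 'a))"
  by (simp add: Tr_def frob_sum sum.swap[of _ "{..<n}"])

lemma Tr_mult_K: "c \<in> K \<Longrightarrow> Tr q n (c * x) = c * Tr q n x"
  by (simp add: Tr_def power_mult_distrib K_power_q_power sum_distrib_left)

lemma Tr_power_q2: "Tr q n ((x::'a) ^ (q^2)) = Tr q n x"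
proof -
  define f where "f j = x ^ (q ^ (2*j))" for j
  have "Tr q n (x ^ (q^2)) = (\<Sum>j<n. f (Suc j))"
    using power_q_power_power_q_power[of x 2] by (simp add: Tr_def f_def add.commute)
  also have "\<dots> = (\<Sum>j<n. f j)"
    using sum.lessThan_Suc_shift[of f n] power_q_2n[of x] by (simp add: f_def add.commute)
  finally show ?thesis
    by (simp add: Tr_def f_def)
qed

lemma Tr_power_q_power: "Tr q n ((x::'a) ^ (q ^ (2*m))) = Tr q n x"
proof (induction m)
  case (Suc m)
  have "x ^ (q ^ (2 * Suc m)) = (x ^ (q ^ (2*m))) ^ (q^2)"
    using power_q_power_power_q_power[of x "2*m" 2] by simp
  then show ?case
    using Suc Tr_power_q2 by simp
qed simp

lemma frob1_Tr: "(Tr q n (x::'a)) ^ q = Tr q n (x ^ q)"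
  unfolding Tr_def frob1_sum
  by (intro sum.cong) (simp_all flip: power_mult add: mult.commute)

lemma Tr_in_K: "Tr q n (x::'a) \<in> K"
  using frob_sum[of "\<lambda>j. x ^ (q ^ (2*j))" "{..<n}" 2] Tr_power_q2[of x]
  by (simp add: K_iff Tr_def flip: power_mult) (simp add: mult.commute)

lemma card_Tr_zero_le: "card {y::'a. Tr q n y = 0} \<le> q ^ (2*(n-1))"
proof -
  define p :: "'a poly" where "p = (\<Sum>j<n. monom 1 (q ^ (2*j)))"
  have "coeff p (q ^ (2*(n-1))) = (\<Sum>j<n. if j = n - 1 then 1 else 0)"
    using q_ge_2 by (simp add: p_def coeff_sum coeff_monom power_inject_exp)
  then have "p \<noteq> 0"
    using n_pos by auto
  moreover have "degree p \<le> q ^ (2*(n-1))"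
    unfolding p_def using q_pos
    by (intro degree_sum_le) (auto simp: degree_monom_eq intro: power_increasing)
  moreover have "poly p y = Tr q n y" for y
    by (simp add: p_def Tr_def poly_sum poly_monom)
  ultimately show ?thesis
    using card_le_degree_if_poly_roots[of p "{y. Tr q n y = 0}"] by auto
qed

lemma ex_Tr_nonzero: "\<exists>t::'a. Tr q n t \<noteq> 0"
proof (rule ccontr)
  assume "\<not> ?thesis"
  then have "q ^ (2*n) \<le> q ^ (2*(n-1))"
    using card_Tr_zero_le card_UNIV by simp
  moreover have "q ^ (2*(n-1)) < q ^ (2*n)"
    using q_ge_2 n_pos by (intro power_strict_increasing) auto
  ultimately show False
    by simp
qed

text \<open>The lower bound: \<open>x \<mapsto> x^(q^2) - x\<close> has kernel \<open>K\<close> and lands in the kernel of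
  the trace.\<close>

lemma card_K: "card K = q^2"
proof (rule antisym)
  show "card K \<le> q^2"
    using q_ge_2 power_strict_increasing[of 1 2 q]
    by (intro card_le_if_trinomial_roots[where b = "-1" and c = 0]) (auto simp: K_iff)
next
  define \<phi> where "\<phi> x = x ^ (q^2) - x" for x :: 'a
  have "card (UNIV::'a set) = card {x\<in>UNIV. \<phi> x = 0} * card (\<phi> ` UNIV)"
    by (rule card_eq_card_kernel_mult_card_image) (auto simp: \<phi>_def frob_diff[of _ _ 2, simplified])
  moreover have "{x\<in>UNIV. \<phi> x = 0} = K"
    by (auto simp: \<phi>_def K_iff)
  moreover have "\<phi> ` UNIV \<subseteq> {y. Tr q n y = 0}"
    by (auto simp: \<phi>_def Tr_diff Tr_power_q2)
  then have "card (\<phi> ` UNIV) \<le> q ^ (2*(n-1))"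
    using card_Tr_zero_le by (meson card_mono finite order.trans)
  ultimately have "q^2 * q ^ (2*(n-1)) \<le> card K * q ^ (2*(n-1))"
    using card_UNIV n_pos
    by (metis mult_le_mono2 power_add add_2_eq_Suc' Suc_diff_1 mult_Suc_right)
  then show "q^2 \<le> card K"
    using q_pos by simp
qed

definition Fq :: "'a set" where
  "Fq = {x. x ^ q = x}"

lemma card_Fq: "card Fq = q"
proof (rule antisym)
  show "card Fq \<le> q"
    using q_ge_2 by (intro card_le_if_trinomial_roots[where b = "-1" and c = 0]) (auto simp: Fq_def)
next
  define \<psi> where "\<psi> x = x ^ q - x" for x :: 'a
  have "card K = card {x\<in>K. \<psi> x = 0} * card (\<psi> ` K)"
    by (rule card_eq_card_kernel_mult_card_image) (auto simp: \<psi>_def frob1_diff K_diff)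
  moreover have "{x\<in>K. \<psi> x = 0} = Fq"
    by (auto simp: \<psi>_def Fq_def K_iff power2_eq_square power_mult)
  moreover have "card (\<psi> ` K) \<le> q"
    using q_ge_2
    by (intro card_le_if_trinomial_roots[where b = 1 and c = 0])
      (auto simp: \<psi>_def frob1_diff K_iff power2_eq_square simp flip: power_mult)
  ultimately have "q * q \<le> card Fq * q"
    using card_K by (simp add: power2_eq_square)
  then show "q \<le> card Fq"
    using q_pos by simp
qed

lemma ex_K_notin_Fq: "\<exists>l\<in>K. l ^ q \<noteq> l"
proof (rule ccontr)
  assume "\<not> ?thesis"
  then have "card K \<le> card Fq"
    by (intro card_mono) (auto simp: Fq_def)
  then show False
    using q_ge_2 by (simp add: card_K card_Fq power2_eq_square)
qed

lemma norm_in_Fq: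
  assumes "x \<in> K"
  shows "x ^ (q+1) \<in> Fq"
proof -
  have "(x ^ (q+1)) ^ q = x ^ (q^2) * x ^ q"
    by (simp add: power_mult[symmetric] power_add[symmetric] power2_eq_square algebra_simps)
  then show ?thesis
    using assms by (simp add: Fq_def K_iff)
qed

text \<open>The norm maps the \<open>q^2 - 1\<close> units of \<open>K\<close> onto the \<open>q - 1\<close> units of \<open>Fq\<close>, and no
  fibre has more than \<open>q + 1\<close> elements, so every fibre has exactly \<open>q + 1\<close>.\<close>

lemma card_norm_fiber:
  assumes "s \<in> Fq" "s \<noteq> 0"
  shows "card {x\<in>K. x ^ (q+1) = s} = q + 1"
proof -
  define F where "F s = {x\<in>K. x ^ (q+1) = s}" for s
  define S where "S = Fq - {0}"
  have le: "card (F s) \<le> q + 1" for s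
    unfolding F_def using q_pos by (intro card_le_if_trinomial_roots[where b = 0 and c = "-s"]) auto
  have "K - {0} = (\<Union>s\<in>S. F s)"
    using norm_in_Fq by (auto simp: S_def F_def)
  then have "card (K - {0}) = (\<Sum>s\<in>S. card (F s))"
    by (simp, intro card_UN_disjoint) (auto simp: F_def)
  moreover have "card S = q - 1"
    using q_pos card_Fq by (simp add: S_def Fq_def power_0_left)
  then have "card (K - {0}) = (\<Sum>s\<in>S. q + 1)"
    using q_pos by (simp add: card_K power2_eq_square algebra_simps)
  ultimately have "\<not> (\<Sum>s\<in>S. card (F s)) < (\<Sum>s\<in>S. q + 1)"
    by simp
  then have "\<not> (\<exists>s\<in>S. card (F s) < q + 1)"
    using sum_strict_mono_ex1[of S "\<lambda>s. card (F s)" "\<lambda>_. q + 1"] le by auto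
  then show ?thesis
    using assms le[of s] by (force simp: S_def F_def)
qed

lemma Uset_eq: "Uset q = {x\<in>K. x ^ (q+1) = 1}"
proof -
  have "x \<in> K" if "x ^ (q+1) = 1" for x :: 'a
  proof -
    have "q^2 = (q+1)*(q-1) + 1"
      using q_pos by (simp add: power2_eq_square algebra_simps)
    then have "x ^ (q^2) = (x^(q+1))^(q-1) * x"
      by (simp only: power_add power_mult power_one_right)
    then show ?thesis
      using that by (simp add: K_iff)
  qed
  then show ?thesis
    by (auto simp: Uset_def)
qed

lemma card_Uset: "card (Uset q :: 'a set) = q + 1"
  using card_norm_fiber[of 1] by (simp add: Uset_eq Fq_def)

section \<open>Dimension over \<open>F_{q^2}\<close>\<close>

definition K_subspace :: "'a set \<Rightarrow> bool" where
  "K_subspace V \<longleftrightarrow> 0 \<in> V \<and> (\<forall>x\<in>V. \<forall>y\<in>V. x + y \<in> V) \<and> (\<forall>c\<in>K. \<forall>x\<in>V. c * x \<in> V)"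

lemma K_subspace_add: "K_subspace V \<Longrightarrow> x \<in> V \<Longrightarrow> y \<in> V \<Longrightarrow> x + y \<in> V"
  and K_subspace_mult: "K_subspace V \<Longrightarrow> c \<in> K \<Longrightarrow> x \<in> V \<Longrightarrow> c * x \<in> V"
  by (auto simp: K_subspace_def)

lemma K_subspace_diff: "K_subspace V \<Longrightarrow> x \<in> V \<Longrightarrow> y \<in> V \<Longrightarrow> x - y \<in> V"
  using K_subspace_add[of V x "(-1) * y"] K_subspace_mult[of V "-1" y] K_minus[OF K_1] by simp

lemma K_subspace_sum: "K_subspace V \<Longrightarrow> (\<And>i. i \<in> A \<Longrightarrow> f i \<in> V) \<Longrightarrow> sum f A \<in> V"
  by (induction A rule: infinite_finite_induct) (auto simp: K_subspace_def)

lemma sub_span_subset: "K_subspace V \<Longrightarrow> B \<subseteq> V \<Longrightarrow> sub_span K B \<subseteq> V"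
  by (auto simp: sub_span_def K_subspace_def intro!: K_subspace_sum)

lemma in_sub_span:
  assumes "finite B" "y \<in> B"
  shows "y \<in> sub_span K B"
proof -
  have "(\<Sum>b\<in>B. (if b = y then 1 else 0) * b) = (\<Sum>b\<in>B. if b = y then b else 0)"
    by (rule sum.cong) auto
  also have "\<dots> = y"
    using assms by (simp add: sum.delta')
  finally show ?thesis
    unfolding sub_span_def by (intro CollectI exI[of _ "\<lambda>b. if b = y then 1 else 0"]) simp
qed

lemma card_sub_span:
  assumes "finite B" and indep: "sub_indep K B"
  shows "card (sub_span K B) = card K ^ card B"
proof -
  define \<phi> where "\<phi> c = (\<Sum>b\<in>B. c b * b)" for c :: "'a \<Rightarrow> 'a"
  have "\<phi> ` (PiE B (\<lambda>_. K)) = sub_span K B"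
  proof (intro subset_antisym subsetI)
    fix y assume "y \<in> sub_span K B"
    then obtain c where c: "\<forall>b\<in>B. c b \<in> K" "y = (\<Sum>b\<in>B. c b * b)"
      by (auto simp: sub_span_def)
    then have "\<phi> (restrict c B) = y"
      by (simp add: \<phi>_def)
    then show "y \<in> \<phi> ` (PiE B (\<lambda>_. K))"
      using c(1) by (metis PiE_restrict imageI restrict_PiE_iff)
  qed (auto simp: sub_span_def \<phi>_def)
  moreover have "inj_on \<phi> (PiE B (\<lambda>_. K))"
  proof (rule inj_onI)
    fix c c' assume c: "c \<in> PiE B (\<lambda>_. K)" and c': "c' \<in> PiE B (\<lambda>_. K)" and "\<phi> c = \<phi> c'"
    then have "(\<Sum>b\<in>B. (c b - c' b) * b) = 0"
      by (simp add: \<phi>_def left_diff_distrib sum_subtractf)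
    moreover have "\<forall>b\<in>B. c b - c' b \<in> K"
      using c c' by (auto intro: K_diff)
    ultimately have "\<forall>b\<in>B. c b - c' b = 0"
      using indep[unfolded sub_indep_def, rule_format, of "\<lambda>b. c b - c' b"] by blast
    then show "c = c'"
      using c c' by (intro PiE_ext[OF c c']) auto
  qed
  ultimately have "card (sub_span K B) = card (PiE B (\<lambda>_. K))"
    using card_image by fastforce
  then show ?thesis
    using \<open>finite B\<close> by (simp add: card_PiE)
qed

lemma sub_indep_insert:
  assumes "finite B" and indep: "sub_indep K B" and y: "y \<notin> sub_span K B"
  shows "sub_indep K (insert y B)"
  unfolding sub_indep_def
proof (intro allI impI)
  fix c assume c: "(\<forall>b\<in>insert y B. c b \<in> K) \<and> (\<Sum>b\<in>insert y B. c b * b) = 0"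
  have "y \<notin> B"
    using y in_sub_span \<open>finite B\<close> by blast
  then have sum0: "c y * y + (\<Sum>b\<in>B. c b * b) = 0"
    using c \<open>finite B\<close> by simp
  have "c y = 0"
  proof (rule ccontr)
    assume cy: "c y \<noteq> 0"
    then have "y = - (\<Sum>b\<in>B. c b * b) / c y"
      using sum0 by (simp add: field_simps eq_neg_iff_add_eq_0)
    also have "\<dots> = (\<Sum>b\<in>B. (- c b / c y) * b)"
      by (simp add: sum_divide_distrib flip: sum_negf)
    finally have "y = (\<Sum>b\<in>B. (- c b / c y) * b)" .
    moreover have "\<forall>b\<in>B. - c b / c y \<in> K"
      using c by (auto intro!: K_divide K_minus)
    ultimately have "y \<in> sub_span K B"
      unfolding sub_span_def by (intro CollectI exI[of _ "\<lambda>b. - c b / c y"]) simp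
    then show False
      using y by simp
  qed
  moreover have "\<forall>b\<in>B. c b = 0"
    using indep c sum0 \<open>c y = 0\<close> unfolding sub_indep_def by simp
  ultimately show "\<forall>b\<in>insert y B. c b = 0"
    by simp
qed

lemma ex_sub_basis:
  assumes V: "K_subspace V"
  shows "\<exists>B. sub_basis K V B"
proof -
  define S where "S = {B. B \<subseteq> V \<and> sub_indep K B}"
  have "{} \<in> S"
    by (simp add: S_def sub_indep_def)
  moreover have "finite S"
    by simp
  ultimately obtain B where B: "B \<in> S" and max: "\<And>B'. B' \<in> S \<Longrightarrow> card B' \<le> card B"
    using Max_in[of "card ` S"] Max_ge[of "card ` S"]
    by (metis empty_iff finite_imageI image_eqI image_iff)
  have "V \<subseteq> sub_span K B"
  proof
    fix y assume "y \<in> V"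
    show "y \<in> sub_span K B"
    proof (rule ccontr)
      assume y: "y \<notin> sub_span K B"
      then have "insert y B \<in> S"
        using B \<open>y \<in> V\<close> sub_indep_insert[OF _ _ y] by (auto simp: S_def)
      moreover have "y \<notin> B"
        using y in_sub_span[of B y] by auto
      ultimately show False
        using max[of "insert y B"] by simp
    qed
  qed
  moreover have "sub_span K B \<subseteq> V"
    using B V sub_span_subset by (auto simp: S_def)
  ultimately show ?thesis
    using B by (auto simp: sub_basis_def S_def)
qed

lemma card_eq_power_dim_over:
  assumes "K_subspace V"
  shows "card V = (q^2) ^ dim_over K V"
proof -
  define B where "B = (SOME B. sub_basis K V B)"
  have "sub_basis K V B"
    unfolding B_def using ex_sub_basis[OF assms] by (rule someI_ex)
  then have "card V = card K ^ card B"
    using card_sub_span[of B] by (auto simp: sub_basis_def)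
  then show ?thesis
    by (simp add: dim_over_def B_def card_K)
qed

end

section \<open>Hermitian forms over \<open>F_{q^2}\<close>\<close>

definition diag_density :: "nat \<Rightarrow> nat \<Rightarrow> 'a::zero \<Rightarrow> real" where
  "diag_density q r t = (if t = 0 then 1 + (real q - 1) * (-1/real q) ^ r else 1 - (-1/real q) ^ r)"

text \<open>The recursion behind \<open>diag_count_formula\<close>: if \<open>W\<close> has \<open>z0\<close> vectors of length \<open>0\<close> and
  \<open>z1\<close> of each admissible nonzero length, then \<open>K u0 \<oplus> W\<close> with \<open>g u0 u0 \<noteq> 0\<close> has
  \<open>z0 + (q^2 - 1) z1\<close> of length \<open>0\<close> and \<open>(q + 1) z0 + (q^2 - q - 1) z1\<close> of each nonzero one.\<close>

lemma hermitian_count_step: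
  fixes q w z0 z1 \<rho> :: real
  assumes "q \<noteq> 0" and "q * z0 = w * (1 + (q - 1) * \<rho>)" and "q * z1 = w * (1 - \<rho>)"
  shows "q * (z0 + (q^2 - 1) * z1) = q^2 * w * (1 + (q - 1) * (- \<rho> / q))"
    and "q * ((q + 1) * z0 + (q^2 - (q + 1)) * z1) = q^2 * w * (1 - (- \<rho> / q))"
proof -
  have "q * (z0 + (q^2 - 1) * z1) = q * z0 + (q^2 - 1) * (q * z1)"
    by (simp add: algebra_simps)
  also have "\<dots> = w * (1 + (q - 1) * \<rho>) + (q^2 - 1) * (w * (1 - \<rho>))"
    by (simp only: assms(2,3))
  also have "\<dots> = q^2 * w * (1 + (q - 1) * (- \<rho> / q))"
    using assms(1) by (simp add: field_simps power2_eq_square)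
  finally show "q * (z0 + (q^2 - 1) * z1) = q^2 * w * (1 + (q - 1) * (- \<rho> / q))" .
  have "q * ((q + 1) * z0 + (q^2 - (q + 1)) * z1) = (q + 1) * (q * z0) + (q^2 - (q + 1)) * (q * z1)"
    by (simp add: algebra_simps)
  also have "\<dots> = (q + 1) * (w * (1 + (q - 1) * \<rho>)) + (q^2 - (q + 1)) * (w * (1 - \<rho>))"
    by (simp only: assms(2,3))
  also have "\<dots> = q^2 * w * (1 - (- \<rho> / q))"
    using assms(1) by (simp add: field_simps power2_eq_square)
  finally show "q * ((q + 1) * z0 + (q^2 - (q + 1)) * z1) = q^2 * w * (1 - (- \<rho> / q))" .
qed

text \<open>\<open>v\<close>-Hermitian forms: \<open>v = 1\<close> is the Hermitian case, and applying \<open>g_swap\<close> twice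
  forces \<open>v^(q+1) = 1\<close> unless \<open>g = 0\<close>.\<close>

locale hermitian_form = q2n_field q n for q n :: nat +
  fixes v :: "'a::{field,finite}" and g :: "'a \<Rightarrow> 'a \<Rightarrow> 'a"
  assumes v_unit: "v ^ (q+1) = 1"
    and g_add_left: "g (u1 + u2) w = g u1 w + g u2 w"
    and g_mult_left: "c \<in> K \<Longrightarrow> g (c * u) w = c * g u w"
    and g_swap: "g w u = v * (g u w) ^ q"
    and g_in_K: "g u w \<in> K"
begin

definition rad :: "'a set \<Rightarrow> 'a set" where
  "rad V = {u\<in>V. \<forall>w\<in>V. g u w = 0}"

definition diag_count :: "'a set \<Rightarrow> 'a \<Rightarrow> nat" where
  "diag_count V t = card {u\<in>V. g u u = t}"

definition orth :: "'a set \<Rightarrow> 'a \<Rightarrow> 'a set" where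
  "orth V u0 = {y\<in>V. g y u0 = 0}"

lemma g_add_right: "g u (w1 + w2) = g u w1 + g u w2"
  by (simp add: g_swap[of u] g_add_left frob1_add algebra_simps)

lemma g_mult_right: "c \<in> K \<Longrightarrow> g u (c * w) = c ^ q * g u w"
  by (simp add: g_swap[of u] g_mult_left power_mult_distrib algebra_simps)

lemma g_0_left [simp]: "g 0 w = 0"
  using g_mult_left[of 0 0 w] by simp

lemma g_zero_swap: "g u w = 0 \<longleftrightarrow> g w u = 0"
  using g_swap[of u w] g_swap[of w u] v_unit q_pos by (auto simp: power_0_left)

lemma g_diff_left: "g (u1 - u2) w = g u1 w - g u2 w"
  using g_add_left[of u1 "- u2" w] g_mult_left[of "-1" u2 w] K_minus[OF K_1] by simp

lemma g_diag_add: "g (u + w) (u + w) = g u u + g u w + g w u + g w w"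
  by (simp add: g_add_left g_add_right)

text \<open>Here \<open>b = g u w\<close> satisfies \<open>b + v b^q = 0\<close> and, replacing \<open>u\<close> by \<open>l u\<close> with
  \<open>l^q \<noteq> l\<close>, also \<open>l b + l^q v b^q = 0\<close>.\<close>

lemma diag_zero_imp_zero:
  assumes V: "K_subspace V" and diag: "\<forall>u\<in>V. g u u = 0" and "u \<in> V" "w \<in> V"
  shows "g u w = 0"
proof -
  have sym0: "g x y + v * (g x y) ^ q = 0" if "x \<in> V" "y \<in> V" for x y
    using diag that K_subspace_add[OF V that] g_diag_add[of x y] g_swap[of y x] by simp
  obtain l where l: "l \<in> K" "l ^ q \<noteq> l"
    using ex_K_notin_Fq by auto
  have "l * g u w + l ^ q * (v * (g u w) ^ q) = 0"
    using sym0[OF K_subspace_mult[OF V l(1) \<open>u \<in> V\<close>] \<open>w \<in> V\<close>] g_mult_left[OF l(1)]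
    by (simp add: power_mult_distrib algebra_simps)
  moreover have "v * (g u w) ^ q = - g u w"
    using sym0[OF \<open>u \<in> V\<close> \<open>w \<in> V\<close>] by (simp add: eq_neg_iff_add_eq_0 add.commute)
  ultimately have "(l - l ^ q) * g u w = 0"
    by (simp add: algebra_simps)
  then show ?thesis
    using l by simp
qed

lemma K_subspace_orth: "K_subspace V \<Longrightarrow> K_subspace (orth V u0)"
  by (auto simp: K_subspace_def orth_def g_add_left g_mult_left)

lemma bij_betw_orth_decomp:
  assumes V: "K_subspace V" and u0: "u0 \<in> V" "g u0 u0 \<noteq> 0"
  shows "bij_betw (\<lambda>(x, y). x * u0 + y) (K \<times> orth V u0) V"
proof (rule bij_betw_imageI)
  have coord: "g (x * u0 + y) u0 = x * g u0 u0" if "x \<in> K" "y \<in> orth V u0" for x y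
    using that by (simp add: g_add_left g_mult_left orth_def)
  show "inj_on (\<lambda>(x, y). x * u0 + y) (K \<times> orth V u0)"
  proof (rule inj_onI, clarify)
    fix x1 y1 x2 y2
    assume "x1 \<in> K" "y1 \<in> orth V u0" "x2 \<in> K" "y2 \<in> orth V u0" and eq: "x1 * u0 + y1 = x2 * u0 + y2"
    then have "x1 = x2"
      using coord[of x1 y1] coord[of x2 y2] u0(2) by simp
    then show "x1 = x2 \<and> y1 = y2"
      using eq by simp
  qed
  show "(\<lambda>(x, y). x * u0 + y) ` (K \<times> orth V u0) = V"
  proof (intro subset_antisym subsetI)
    fix u assume "u \<in> (\<lambda>(x, y). x * u0 + y) ` (K \<times> orth V u0)"
    then show "u \<in> V"
      using V u0(1) by (auto simp: orth_def intro!: K_subspace_add K_subspace_mult)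
  next
    fix u assume u: "u \<in> V"
    define x where "x = g u u0 / g u0 u0"
    have x: "x \<in> K"
      by (simp add: x_def K_divide g_in_K)
    have "g (u - x * u0) u0 = g u u0 - x * g u0 u0"
      by (simp add: g_diff_left g_mult_left[OF x])
    then have "u - x * u0 \<in> orth V u0"
      using u0 K_subspace_diff[OF V u K_subspace_mult[OF V x u0(1)]] by (simp add: orth_def x_def)
    then show "u \<in> (\<lambda>(x, y). x * u0 + y) ` (K \<times> orth V u0)"
      using x by (intro image_eqI[of _ _ "(x, u - x * u0)"]) auto
  qed
qed

lemma orth_decomp:
  assumes "K_subspace V" "u0 \<in> V" "g u0 u0 \<noteq> 0" "u \<in> V"
  obtains x y where "x \<in> K" "y \<in> orth V u0" "u = x * u0 + y"
proof -
  obtain p where "p \<in> K \<times> orth V u0" "u = (\<lambda>(x, y). x * u0 + y) p"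
    using assms(4) bij_betw_imp_surj_on[OF bij_betw_orth_decomp[OF assms(1-3)]] by blast
  then show ?thesis
    using that by (cases p) auto
qed

lemma card_orth:
  assumes "K_subspace V" "u0 \<in> V" "g u0 u0 \<noteq> 0"
  shows "card V = q^2 * card (orth V u0)"
  using bij_betw_same_card[OF bij_betw_orth_decomp[OF assms]]
  by (simp add: card_cartesian_product card_K)

lemma rad_orth:
  assumes V: "K_subspace V" and u0: "u0 \<in> V" "g u0 u0 \<noteq> 0"
  shows "rad (orth V u0) = rad V"
proof
  show "rad V \<subseteq> rad (orth V u0)"
    using u0 by (auto simp: rad_def orth_def)
  show "rad (orth V u0) \<subseteq> rad V"
  proof
    fix u assume u: "u \<in> rad (orth V u0)"
    have "g u w = 0" if "w \<in> V" for w
    proof -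
      obtain x y where "x \<in> K" "y \<in> orth V u0" "w = x * u0 + y"
        using orth_decomp[OF assms \<open>w \<in> V\<close>] .
      moreover have "g u u0 = 0"
        using u by (simp add: rad_def orth_def)
      ultimately show ?thesis
        using u by (simp add: rad_def g_add_right g_mult_right)
    qed
    then show "u \<in> rad V"
      using u by (auto simp: rad_def orth_def)
  qed
qed

lemma diag_count_orth_sum:
  assumes "K_subspace V" "u0 \<in> V" "g u0 u0 \<noteq> 0"
  shows "diag_count V t = (\<Sum>x\<in>K. diag_count (orth V u0) (t - x ^ (q+1) * g u0 u0))"
proof -
  let ?f = "\<lambda>(x, y). x * u0 + y"
  define S where "S = Sigma K (\<lambda>x. {y\<in>orth V u0. g y y = t - x ^ (q+1) * g u0 u0})"
  have bij: "bij_betw ?f (K \<times> orth V u0) V"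
    by (rule bij_betw_orth_decomp[OF assms])
  have diag: "g (x * u0 + y) (x * u0 + y) = x ^ (q+1) * g u0 u0 + g y y"
    if "x \<in> K" "y \<in> orth V u0" for x y
    using that g_zero_swap[of y u0]
    by (simp add: g_diag_add g_mult_left g_mult_right orth_def mult.assoc)
  have "?f ` S = {u\<in>V. g u u = t}"
  proof (intro subset_antisym subsetI)
    fix u assume "u \<in> ?f ` S"
    then obtain x y where "(x, y) \<in> K \<times> orth V u0" "g y y = t - x ^ (q+1) * g u0 u0"
      and "u = x * u0 + y"
      by (auto simp: S_def)
    then show "u \<in> {u\<in>V. g u u = t}"
      using bij_betw_apply[OF bij] diag by fastforce
  next
    fix u assume u: "u \<in> {u\<in>V. g u u = t}"
    then obtain x y where "x \<in> K" "y \<in> orth V u0" "u = x * u0 + y"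
      using orth_decomp[OF assms] by blast
    then show "u \<in> ?f ` S"
      using u diag by (intro image_eqI[of _ _ "(x, y)"]) (auto simp: S_def)
  qed
  moreover have "inj_on ?f S"
    using bij_betw_imp_inj_on[OF bij] by (rule inj_on_subset) (auto simp: S_def)
  ultimately have "diag_count V t = card S"
    unfolding diag_count_def by (metis card_image)
  then show ?thesis
    by (simp add: S_def card_SigmaI diag_count_def)
qed

definition admissible :: "'a \<Rightarrow> bool" where
  "admissible t \<longleftrightarrow> t \<in> K \<and> v * t ^ q = t"

lemma admissible_diag: "admissible (g u u)"
  using g_in_K g_swap[of u u, symmetric] by (simp add: admissible_def)

lemma admissible_diff_norm_mult:
  assumes t: "admissible t" and a: "admissible a" and x: "x \<in> K"
  shows "admissible (t - x ^ (q+1) * a)"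
proof -
  have "(x ^ (q+1)) ^ q = x ^ (q+1)"
    using norm_in_Fq[OF x] by (simp add: Fq_def)
  then have "(t - x ^ (q+1) * a) ^ q = t ^ q - x ^ (q+1) * a ^ q"
    by (simp only: frob1_diff power_mult_distrib)
  then have "v * (t - x ^ (q+1) * a) ^ q = v * t ^ q - x ^ (q+1) * (v * a ^ q)"
    by (simp only: right_diff_distrib mult.left_commute)
  also have "\<dots> = t - x ^ (q+1) * a"
    using t a by (simp add: admissible_def)
  finally show ?thesis
    using t a x by (simp add: admissible_def K_diff K_mult K_power)
qed

lemma card_norm_fiber_quotient:
  assumes a: "admissible a" "a \<noteq> 0" and t: "admissible t"
  shows "card {x\<in>K. x ^ (q+1) = t / a} = (if t = 0 then 1 else q + 1)"
proof (cases "t = 0")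
  case True
  then have "{x\<in>K. x ^ (q+1) = t / a} = {0}"
    by auto
  then show ?thesis
    using True by simp
next
  case False
  have "v \<noteq> 0"
    using v_unit by auto
  then have "(t / a) ^ q = (v * t ^ q) / (v * a ^ q)"
    by (simp add: power_divide)
  also have "\<dots> = t / a"
    using a(1) t by (simp add: admissible_def)
  finally have "(t / a) ^ q = t / a" .
  then show ?thesis
    using False a(2) card_norm_fiber[of "t / a"] by (simp add: Fq_def)
qed

text \<open>Each vector of \<open>orth V u0\<close> of length \<open>s\<close> yields one vector of \<open>V\<close> of length \<open>t\<close> for each
  \<open>x \<in> K\<close> with \<open>x^(q+1) g u0 u0 = t - s\<close>; the nonzero lengths all occur equally often.\<close>

lemma diag_count_orth:
  assumes V: "K_subspace V" and u0: "u0 \<in> V" "g u0 u0 \<noteq> 0" and t: "admissible t"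
    and z: "\<And>s. admissible s \<Longrightarrow> s \<noteq> 0 \<Longrightarrow> real (diag_count (orth V u0) s) = z"
  defines "P \<equiv> {x\<in>K. x ^ (q+1) = t / g u0 u0}"
  shows "real (diag_count V t) =
    real (card P) * real (diag_count (orth V u0) 0) + (real q^2 - real (card P)) * z"
proof -
  have summand: "real (diag_count (orth V u0) (t - x ^ (q+1) * g u0 u0)) =
      (if x \<in> P then real (diag_count (orth V u0) 0) else z)" if x: "x \<in> K" for x
  proof (cases "x \<in> P")
    case False
    then have "t - x ^ (q+1) * g u0 u0 \<noteq> 0"
      using x u0(2) by (auto simp: P_def field_simps)
    then show ?thesis
      using False z admissible_diff_norm_mult[OF t admissible_diag x] by simp
  qed (use u0(2) in \<open>simp add: P_def\<close>)
  have "P \<subseteq> K"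
    by (auto simp: P_def)
  then have "card (K - P) = q^2 - card P" and "card P \<le> q^2"
    using card_K card_mono[of K P] by (simp_all add: card_Diff_subset)
  then have "real (card (K - P)) = real q^2 - real (card P)"
    by (simp add: of_nat_diff)
  moreover have "real (diag_count V t) =
      (\<Sum>x\<in>K. if x \<in> P then real (diag_count (orth V u0) 0) else z)"
    unfolding diag_count_orth_sum[OF V u0] of_nat_sum by (intro sum.cong refl) (rule summand)
  moreover have "K \<inter> P = P"
    using \<open>P \<subseteq> K\<close> by blast
  ultimately show ?thesis
    by (simp add: sum.If_cases Diff_eq)
qed

lemma diag_count_orth_density:
  assumes V: "K_subspace V" and u0: "u0 \<in> V" "g u0 u0 \<noteq> 0"
    and IH: "\<And>s. admissible s \<Longrightarrow>
      real q * real (diag_count (orth V u0) s) = real (card (orth V u0)) * diag_density q r s"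
    and t: "admissible t"
  shows "real q * real (diag_count V t) = real (card V) * diag_density q (Suc r) t"
proof -
  let ?W = "orth V u0"
  define \<rho> where "\<rho> = (-1/real q) ^ r"
  define z where "z = real (card ?W) * (1 - \<rho>) / real q"
  have q: "real q \<noteq> 0"
    using q_pos by simp
  have "admissible 0"
    using q_pos by (simp add: admissible_def power_0_left)
  then have z0: "real q * real (diag_count ?W 0) = real (card ?W) * (1 + (real q - 1) * \<rho>)"
    using IH by (simp add: diag_density_def \<rho>_def)
  have qz: "real q * z = real (card ?W) * (1 - \<rho>)"
    using q by (simp add: z_def)
  have z: "real (diag_count ?W s) = z" if "admissible s" "s \<noteq> 0" for s
    using IH[OF that(1)] that(2) q by (simp add: diag_density_def z_def \<rho>_def field_simps)
  have card_V: "real (card V) = real q^2 * real (card ?W)"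
    using card_orth[OF V u0] by simp
  define P where "P = {x\<in>K. x ^ (q+1) = t / g u0 u0}"
  have card_P: "card P = (if t = 0 then 1 else q + 1)"
    unfolding P_def by (rule card_norm_fiber_quotient[OF admissible_diag u0(2) t])
  have count: "real (diag_count V t) =
      real (card P) * real (diag_count ?W 0) + (real q^2 - real (card P)) * z"
    unfolding P_def by (rule diag_count_orth[OF V u0 t z])
  show ?thesis
  proof (cases "t = 0")
    case True
    then have "real q * real (diag_count V t) =
        real q * (real (diag_count ?W 0) + (real q^2 - 1) * z)"
      using count card_P by simp
    also have "\<dots> = real (card V) * (1 + (real q - 1) * (- \<rho> / real q))"
      using hermitian_count_step(1)[OF q z0 qz] card_V by simp
    finally show ?thesis
      using True by (simp add: diag_density_def \<rho>_def)
  next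
    case False
    then have "real q * real (diag_count V t) =
        real q * ((real q + 1) * real (diag_count ?W 0) + (real q^2 - (real q + 1)) * z)"
      using count card_P by (simp add: add.commute)
    also have "\<dots> = real (card V) * (1 - (- \<rho> / real q))"
      using hermitian_count_step(2)[OF q z0 qz] card_V by simp
    finally show ?thesis
      using False by (simp add: diag_density_def \<rho>_def)
  qed
qed

theorem diag_count_formula:
  assumes "K_subspace V"
  shows "\<exists>r. card V = q^(2*r) * card (rad V) \<and>
    (\<forall>t. admissible t \<longrightarrow> real q * real (diag_count V t) = real (card V) * diag_density q r t)"
  using assms
proof (induction "card V" arbitrary: V rule: less_induct)
  case less
  note V = less.prems
  show ?case
  proof (cases "\<forall>u\<in>V. g u u = 0")
    case True
    then have "rad V = V"
      using diag_zero_imp_zero[OF V True] by (auto simp: rad_def)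
    moreover have "{u\<in>V. g u u = t} = (if t = 0 then V else {})" for t
      using True by auto
    ultimately show ?thesis
      by (intro exI[of _ 0]) (simp add: diag_count_def diag_density_def)
  next
    case False
    then obtain u0 where u0: "u0 \<in> V" "g u0 u0 \<noteq> 0"
      by auto
    have "card (orth V u0) < card V"
      using u0 by (intro psubset_card_mono) (auto simp: orth_def)
    from less.hyps[OF this K_subspace_orth[OF V]]
    obtain r where r: "card (orth V u0) = q^(2*r) * card (rad (orth V u0))"
      and IH: "\<forall>t. admissible t \<longrightarrow>
        real q * real (diag_count (orth V u0) t) = real (card (orth V u0)) * diag_density q r t"
      by blast
    have "card V = q^(2 * Suc r) * card (rad V)"
      using card_orth[OF V u0] r rad_orth[OF V u0] by (simp add: power_add power2_eq_square)
    moreover have "real q * real (diag_count V t) = real (card V) * diag_density q (Suc r) t"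
      if "admissible t" for t
      using diag_count_orth_density[OF V u0 IH[rule_format] that] .
    ultimately show ?thesis
      by blast
  qed
qed

end

section \<open>The forms attached to \<open>L\<close>\<close>

context q2n_field
begin

lemma linL_add: "linL q n a (x + y) = linL q n a x + linL q n a (y::'a)"
  by (simp add: linL_def frob_add distrib_left sum.distrib)

lemma linL_mult_K: "c \<in> K \<Longrightarrow> linL q n a (c * x) = c * linL q n a (x::'a)"
proof -
  assume c: "c \<in> K"
  have summand: "b * (c * x) ^ (q ^ (2*m)) = c * (b * x ^ (q ^ (2*m)))" for b :: 'a and m
    using K_power_q_power[OF c, of m] by (simp add: power_mult_distrib mult.left_commute)
  show ?thesis
    unfolding linL_def sum_distrib_left by (rule sum.cong[OF refl]) (rule summand)
qed

lemma linLstar_add: "linLstar q n a (x + y) = linLstar q n a x + linLstar q n a (y::'a)"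
  by (simp add: linLstar_def frob_add distrib_left sum.distrib)

lemma linLstar_mult_K: "c \<in> K \<Longrightarrow> linLstar q n a (c * x) = c * linLstar q n a (x::'a)"
proof -
  assume c: "c \<in> K"
  have "(b * (c * x)) ^ (q ^ (2*m)) = c * (b * x) ^ (q ^ (2*m))" for b :: 'a and m
    using K_power_q_power[OF c, of m] by (simp add: power_mult_distrib algebra_simps)
  then show ?thesis
    by (simp add: linLstar_def sum_distrib_left)
qed

text \<open>Raising to the power \<open>q^(2(i+1))\<close> preserves the trace and undoes the power
  \<open>q^(2(n-i-1))\<close>, since \<open>y^(q^(2n)) = y\<close>.\<close>

lemma Tr_mult_power_q_power_swap:
  assumes "i < n"
  shows "Tr q n (u * y ^ (q ^ (2*(n-i-1)))) = Tr q n (y * (u::'a) ^ (q ^ (2*i + 2)))"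
proof -
  have "2*(n-i-1) + 2*(i+1) = 2*n"
    using assms by simp
  then have "(y ^ (q ^ (2*(n-i-1)))) ^ (q ^ (2*(i+1))) = y"
    by (simp only: power_q_power_power_q_power power_q_2n)
  then have "(u * y ^ (q ^ (2*(n-i-1)))) ^ (q ^ (2*(i+1))) = y * u ^ (q ^ (2*i + 2))"
    by (simp add: power_mult_distrib mult.commute)
  then show ?thesis
    using Tr_power_q_power[of "u * y ^ (q ^ (2*(n-i-1)))" "i+1"] by simp
qed

lemma frob1_mult_linL:
  "((w::'a) * linL q n a (u ^ q)) ^ q = (\<Sum>i<n. (a i ^ q * w ^ q) * u ^ (q ^ (2*i + 2)))"
proof -
  have "((u ^ q) ^ (q ^ (2*i))) ^ q = u ^ (q ^ (2*i + 2))" for i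
    by (simp flip: power_mult) (simp add: power_add power2_eq_square mult_ac)
  then show ?thesis
    by (simp add: linL_def power_mult_distrib frob1_sum sum_distrib_left mult_ac)
qed

lemma Tr_mult_linLstar:
  "Tr q n ((u::'a) * linLstar q n a (w ^ q)) = (Tr q n (w * linL q n a (u ^ q))) ^ q"
proof -
  have "Tr q n (u * linLstar q n a (w ^ q)) =
      (\<Sum>i<n. Tr q n (u * (a i ^ q * w ^ q) ^ (q ^ (2*(n-i-1)))))"
    by (simp add: linLstar_def sum_distrib_left Tr_sum)
  also have "\<dots> = (\<Sum>i<n. Tr q n ((a i ^ q * w ^ q) * u ^ (q ^ (2*i + 2))))"
    by (intro sum.cong refl Tr_mult_power_q_power_swap) simp
  also have "\<dots> = (Tr q n (w * linL q n a (u ^ q))) ^ q"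
    by (simp add: frob1_Tr frob1_mult_linL Tr_sum)
  finally show ?thesis .
qed

definition hform :: "(nat \<Rightarrow> 'a) \<Rightarrow> 'a \<Rightarrow> 'a \<Rightarrow> 'a \<Rightarrow> 'a" where
  "hform a v u w = Tr q n (u * (v * linLstar q n a (w ^ q) + linL q n a (w ^ q)))"

lemma hform_eq:
  assumes "v \<in> K"
  shows "hform a v u w =
    Tr q n (u * linL q n a (w ^ q)) + v * (Tr q n (w * linL q n a (u ^ q))) ^ q"
proof -
  have "u * (v * linLstar q n a (w ^ q) + linL q n a (w ^ q)) =
      u * linL q n a (w ^ q) + v * (u * linLstar q n a (w ^ q))"
    by (simp add: algebra_simps)
  then show ?thesis
    by (simp add: hform_def Tr_add Tr_mult_K[OF assms] Tr_mult_linLstar)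
qed

lemma hermitian_form_hform:
  assumes "v \<in> Uset q"
  shows "hermitian_form q n v (hform a v)"
proof
  have v: "v \<in> K" "v ^ (q+1) = 1"
    using assms by (auto simp: Uset_eq)
  show "v ^ (q+1) = 1"
    by (fact v(2))
  show "hform a v (u1 + u2) w = hform a v u1 w + hform a v u2 w" for u1 u2 w
    by (simp add: hform_def distrib_right Tr_add)
  show "hform a v (c * u) w = c * hform a v u w" if "c \<in> K" for c u w
    using that by (simp add: hform_def Tr_mult_K mult.assoc)
  show "hform a v u w \<in> K" for u w
    by (simp add: hform_def Tr_in_K)
  show "hform a v w u = v * hform a v u w ^ q" for u w
  proof -
    define A where "A x y = Tr q n (x * linL q n a (y ^ q))" for x y
    have A_K: "(A x y) ^ (q^2) = A x y" for x y
      using Tr_in_K by (simp add: A_def K_iff)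
    have "v * hform a v u w ^ q = v * (A u w) ^ q + v ^ (q+1) * (A w u) ^ (q^2)"
      using hform_eq[OF v(1), of a u w]
      by (simp add: A_def frob1_add power_mult_distrib power2_eq_square algebra_simps
          flip: power_mult)
    then show ?thesis
      using hform_eq[OF v(1), of a w u] v(2) A_K by (simp add: A_def)
  qed
qed

lemma K_subspace_ker: "v \<in> K \<Longrightarrow> K_subspace {x::'a. v * linLstar q n a x + linL q n a x = 0}"
  using linLstar_mult_K[OF K_0, of a 0] linL_mult_K[OF K_0, of a 0]
  by (auto simp: K_subspace_def linLstar_add linL_add linLstar_mult_K linL_mult_K algebra_simps)
    (metis distrib_left mult.left_commute mult_zero_right)

lemma Tr_mult_eq_0_iff: "(\<forall>w. Tr q n (w * y) = 0) \<longleftrightarrow> (y::'a) = 0"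
proof
  assume "\<forall>w. Tr q n (w * y) = 0"
  moreover obtain s :: 'a where "Tr q n s \<noteq> 0"
    using ex_Tr_nonzero by blast
  ultimately show "y = 0"
    by (metis nonzero_divide_eq_eq)
qed simp

lemma rad_hform:
  assumes "v \<in> Uset q"
  shows "hermitian_form.rad (hform a v) UNIV =
    (\<lambda>u. u ^ q) -` {x. v * linLstar q n a x + linL q n a x = 0}"
proof -
  interpret hermitian_form q n v "hform a v"
    using assms by (rule hermitian_form_hform)
  have "u \<in> rad UNIV \<longleftrightarrow> (\<forall>w. hform a v w u = 0)" for u
    using g_zero_swap by (auto simp: rad_def)
  then show ?thesis
    by (auto simp: hform_def Tr_mult_eq_0_iff)
qed

lemma card_rad_hform:
  assumes "v \<in> Uset q"
  shows "card (hermitian_form.rad (hform a v) UNIV) =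
    card {x::'a. v * linLstar q n a x + linL q n a x = 0}"
proof -
  have "inj (\<lambda>u::'a. u ^ q)"
    by (auto intro: inj_onI frob1_inj)
  moreover have "surj (\<lambda>u::'a. u ^ q)"
    using \<open>inj _\<close> by (simp add: finite_UNIV_inj_surj)
  ultimately show ?thesis
    unfolding rad_hform[OF assms] by (intro card_vimage_inj) auto
qed

theorem diag_count_hform:
  assumes v: "v \<in> Uset q" and t: "t \<in> K" "v * t ^ q = t"
  shows "real q * real (hermitian_form.diag_count (hform a v) UNIV t) =
    real q ^ (2*n) * diag_density q (Rk q n a v) t"
proof -
  interpret hermitian_form q n v "hform a v"
    using v by (rule hermitian_form_hform)
  have "K_subspace UNIV"
    by (simp add: K_subspace_def)
  from diag_count_formula[OF this]
  obtain r where r: "card (UNIV::'a set) = q^(2*r) * card (rad UNIV)"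
    and count: "\<forall>t. admissible t \<longrightarrow>
      real q * real (diag_count UNIV t) = real (card (UNIV::'a set)) * diag_density q r t"
    by blast
  define d where "d = dim_over K {x::'a. v * linLstar q n a x + linL q n a x = 0}"
  have "v \<in> K"
    using v by (simp add: Uset_eq)
  then have "card (rad UNIV) = (q^2) ^ d"
    unfolding card_rad_hform[OF v] d_def by (rule card_eq_power_dim_over[OF K_subspace_ker])
  then have "q ^ (2*n) = q ^ (2*r + 2*d)"
    using r card_UNIV by (simp add: power_add power_mult)
  then have "r = Rk q n a v"
    using q_ge_2 by (simp add: power_inject_exp Rk_def d_def)
  moreover have "admissible t"
    using t by (simp add: admissible_def)
  ultimately show ?thesis
    using count card_UNIV by simp
qed

section \<open>Counting the solutions\<close>

lemma Uset_solutions_nonzero: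
  assumes x: "x \<in> K" "x \<noteq> 0"
  shows "{v\<in>Uset q. x + v * x ^ q = 0} = {- (x / x ^ q)}"
proof -
  have "(x / x ^ q) ^ q = x ^ q / x"
    using x(1) by (simp add: K_iff power_divide power2_eq_square flip: power_mult)
  then have "(- (x / x ^ q)) ^ (q+1) = 1"
    using x(2) by (simp add: frob1_minus)
  moreover have "x + v * x ^ q = 0 \<longleftrightarrow> v = - (x / x ^ q)" for v
    using x(2) by (auto simp: field_simps eq_neg_iff_add_eq_0)
  ultimately show ?thesis
    by (auto simp: Uset_def)
qed

lemma card_Uset_solutions:
  "x \<in> K \<Longrightarrow> card {v\<in>Uset q. x + v * x ^ q = 0} = (if x = 0 then q + 1 else 1)"
  using card_Uset q_pos by (simp add: Uset_solutions_nonzero power_0_left)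

text \<open>Double counting of the pairs \<open>(v, u)\<close> with \<open>x + v x^q = 0\<close> for \<open>x = Tr(u L(u^q)) + c\<close>.\<close>

lemma sum_card_levels:
  fixes a :: "nat \<Rightarrow> 'a"
  assumes "c \<in> K"
  defines "x \<equiv> \<lambda>u. Tr q n (u * linL q n a (u ^ q)) + c"
  shows "(\<Sum>v\<in>Uset q. card {u. x u + v * x u ^ q = 0}) = q ^ (2*n) + q * Ncount q n a c"
proof -
  have x_K: "x u \<in> K" for u
    using assms by (simp add: x_def Tr_in_K K_add)
  have card_filter: "card {y\<in>A. P y} = (\<Sum>y\<in>A. if P y then 1 else 0)"
    if "finite A" for A and P :: "'a \<Rightarrow> bool"
    using that by (simp add: sum.If_cases Collect_conj_eq Int_commute inf_set_def)
  have "(\<Sum>v\<in>Uset q. card {u. x u + v * x u ^ q = 0}) =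
      (\<Sum>v\<in>Uset q. \<Sum>u\<in>UNIV. if x u + v * x u ^ q = 0 then 1 else 0)"
    using card_filter[of UNIV] by simp
  also have "\<dots> = (\<Sum>u\<in>UNIV. \<Sum>v\<in>Uset q. if x u + v * x u ^ q = 0 then 1 else 0)"
    by (rule sum.swap)
  also have "\<dots> = (\<Sum>u\<in>UNIV. card {v\<in>Uset q. x u + v * x u ^ q = 0})"
    using card_filter[of "Uset q"] by simp
  also have "\<dots> = (\<Sum>u\<in>UNIV. 1 + (if x u = 0 then q else 0))"
    by (intro sum.cong refl) (simp add: card_Uset_solutions[OF x_K])
  also have "\<dots> = (\<Sum>u\<in>(UNIV::'a set). 1) + q * (\<Sum>u\<in>UNIV. if x u = 0 then 1 else 0)"
    unfolding sum.distrib sum_distrib_left by (intro arg_cong2[where f = "(+)"] sum.cong) auto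
  also have "\<dots> = q ^ (2*n) + q * Ncount q n a c"
    using card_filter[of UNIV "\<lambda>u. x u = 0"] card_UNIV by (simp add: Ncount_def x_def)
  finally show ?thesis .
qed

lemma v_mult_level_power_q:
  assumes "v \<in> Uset q" "c \<in> K"
  shows "v * (- (c + v * c ^ q)) ^ q = - (c + v * c ^ q)"
proof -
  have "v * (- (c + v * c ^ q)) ^ q = - (v * c ^ q + v ^ (q+1) * (c ^ q) ^ q)"
    by (simp only: frob1_minus frob1_add power_mult_distrib) (simp add: algebra_simps)
  also have "\<dots> = - (c + v * c ^ q)"
    using assms by (simp add: Uset_def K_iff power2_eq_square flip: power_mult)
  finally show ?thesis .
qed

lemma card_level_eq_diag_count:
  fixes a :: "nat \<Rightarrow> 'a"
  assumes "v \<in> Uset q" "c \<in> K"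
  defines "x \<equiv> \<lambda>u. Tr q n (u * linL q n a (u ^ q)) + c"
  shows "card {u. x u + v * x u ^ q = 0} =
    hermitian_form.diag_count (hform a v) UNIV (- (c + v * c ^ q))"
proof -
  interpret hermitian_form q n v "hform a v"
    using assms(1) by (rule hermitian_form_hform)
  have "v \<in> K"
    using assms(1) by (simp add: Uset_eq)
  then have "x u + v * x u ^ q = hform a v u u + (c + v * c ^ q)" for u
    by (simp add: x_def hform_eq frob1_add algebra_simps)
  then have "{u. x u + v * x u ^ q = 0} = {u. hform a v u u = - (c + v * c ^ q)}"
    by (simp add: add_eq_0_iff2)
  then show ?thesis
    by (simp add: diag_count_def)
qed

theorem Ncount_eq:
  assumes "c \<in> K"
  shows "real q^2 * real (Ncount q n a c) = real q ^ (2*n) *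
    (1 - (\<Sum>v\<in>Uset q. (-1/real q) ^ Rk q n a v)
     + real q * (\<Sum>v\<in>{v\<in>Uset q. c + v * c ^ q = 0}. (-1/real q) ^ Rk q n a v))"
proof -
  define x where "x u = Tr q n (u * linL q n a (u ^ q)) + c" for u
  define E where "E = real q ^ (2*n)"
  define \<rho> where "\<rho> v = (-1/real q) ^ Rk q n a v" for v :: 'a
  have level: "real q * real (card {u. x u + v * x u ^ q = 0}) =
      E * (1 - \<rho> v) + (if c + v * c ^ q = 0 then real q * E * \<rho> v else 0)" if v: "v \<in> Uset q" for v
  proof -
    define t where "t = - (c + v * c ^ q)"
    have "v \<in> K"
      using v by (simp add: Uset_eq)
    then have "t \<in> K"
      using assms unfolding t_def by (intro K_minus K_add K_mult K_power)
    moreover have "v * t ^ q = t"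
      unfolding t_def by (rule v_mult_level_power_q[OF v assms])
    moreover have "card {u. x u + v * x u ^ q = 0} = hermitian_form.diag_count (hform a v) UNIV t"
      unfolding x_def t_def by (rule card_level_eq_diag_count[OF v assms])
    moreover have "c + v * c ^ q = 0 \<longleftrightarrow> t = 0"
      unfolding t_def by (rule neg_equal_0_iff_equal[symmetric])
    ultimately show ?thesis
      using diag_count_hform[OF v, of t a]
      by (cases "t = 0") (simp_all add: diag_density_def E_def \<rho>_def algebra_simps)
  qed
  have "real q * (E + real q * real (Ncount q n a c)) =
      (\<Sum>v\<in>Uset q. real q * real (card {u. x u + v * x u ^ q = 0}))"
    using arg_cong[OF sum_card_levels[OF assms, of a], of real] unfolding x_def E_def
    by (simp flip: sum_distrib_left)
  also have "\<dots> = (\<Sum>v\<in>Uset q. E * (1 - \<rho> v)) + (\<Sum>v\<in>{v\<in>Uset q. c + v * c ^ q = 0}. real q * E * \<rho> v)"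
    by (simp add: level sum.distrib sum.inter_filter)
  also have "\<dots> = (real q + 1) * E - E * (\<Sum>v\<in>Uset q. \<rho> v)
      + real q * E * (\<Sum>v\<in>{v\<in>Uset q. c + v * c ^ q = 0}. \<rho> v)"
    by (simp add: sum_subtractf sum_distrib_left card_Uset algebra_simps)
  finally show ?thesis
    by (simp add: E_def \<rho>_def algebra_simps power2_eq_square)
qed

lemma real_power_q_2n: "real q ^ (2*n) = real q^2 * real q ^ (2*(n-1))"
proof -
  have "2*n = 2 + 2*(n-1)"
    using n_pos by simp
  then show ?thesis
    by (metis power_add)
qed

lemma real_power_q_2n_minus_1: "real q * real q ^ (2*(n-1)) = real q ^ (2*n-1)"
proof -
  have "2*n-1 = Suc (2*(n-1))"
    using n_pos by simp
  then show ?thesis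
    by simp
qed

lemma Ncount_zero:
  fixes a :: "nat \<Rightarrow> 'a"
  shows "real (Ncount q n a 0) =
    real q ^ (2*(n-1)) + (real q - 1) * real q ^ (2*(n-1)) * (\<Sum>v\<in>Uset q. (-1/real q) ^ Rk q n a v)"
proof -
  let ?S = "\<Sum>v\<in>Uset q. (-1/real q) ^ Rk q n a v"
  have "{v\<in>Uset q. (0::'a) + v * 0 ^ q = 0} = Uset q"
    using q_pos by (auto simp: power_0_left)
  then have "real q^2 * real (Ncount q n a 0) = real q ^ (2*n) * (1 - ?S + real q * ?S)"
    using Ncount_eq[OF K_0, of a] by simp
  also have "\<dots> = real q^2 * (real q ^ (2*(n-1)) + (real q - 1) * real q ^ (2*(n-1)) * ?S)"
    unfolding real_power_q_2n by (simp add: algebra_simps)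
  finally show ?thesis
    using q_pos by simp
qed

lemma Ncount_nonzero:
  fixes a :: "nat \<Rightarrow> 'a"
  assumes "c \<in> K" "c \<noteq> 0"
  shows "real (Ncount q n a c) =
    real q ^ (2*(n-1)) + real q ^ (2*n-1) * (-1/real q) ^ Rk q n a (- (c / c ^ q))
    - real q ^ (2*(n-1)) * (\<Sum>v\<in>Uset q. (-1/real q) ^ Rk q n a v)"
proof -
  let ?S = "\<Sum>v\<in>Uset q. (-1/real q) ^ Rk q n a v"
  let ?\<rho> = "(-1/real q) ^ Rk q n a (- (c / c ^ q))"
  have "real q^2 * real (Ncount q n a c) = real q ^ (2*n) * (1 - ?S + real q * ?\<rho>)"
    using Ncount_eq[OF assms(1), of a] by (simp add: Uset_solutions_nonzero[OF assms])
  also have "\<dots> = real q^2 * (real q ^ (2*(n-1)) + real q ^ (2*n-1) * ?\<rho> - real q ^ (2*(n-1)) * ?S)"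
    unfolding real_power_q_2n real_power_q_2n_minus_1[symmetric] by (simp add: algebra_simps)
  finally show ?thesis
    using q_pos by simp
qed

end

theorem theorem4p1:
  fixes q n :: nat and a :: "nat \<Rightarrow> 'a::{field,finite}"
  assumes "\<exists>p k. prime p \<and> k > 0 \<and> q = p ^ k"
    and "n > 0"
    and "card (UNIV :: 'a set) = q ^ (2*n)"
  shows "(real (Ncount q n a 0) =
           real q ^ (2*(n-1)) + (real q - 1) * real q ^ (2*(n-1)) *
             (\<Sum>v\<in>Uset q. (- real q) powi (- int (Rk q n a v)))) \<and>
         (\<forall>c\<in>Fq2 q. c \<noteq> 0 \<longrightarrow>
           real (Ncount q n a c) =
             real q ^ (2*(n-1)) + real q ^ (2*n-1) * (- real q) powi (- int (Rk q n a (- (c / c ^ q))))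
             - real q ^ (2*(n-1)) * (\<Sum>v\<in>Uset q. (- real q) powi (- int (Rk q n a v))))"
proof -
  obtain p k where p: "prime p" "k > 0" "q = p ^ k"
    using assms(1) by auto
  then have "CHAR('a) = p"
    using assms(3) CHAR_eq_if_card_eq_prime_power[of p "k * (2*n)"] by (simp add: power_mult)
  then interpret q2n_field q n
    using p assms(2,3) by unfold_locales auto
  show ?thesis
    using Ncount_zero[where a = a] Ncount_nonzero[where a = a] by (simp add: power_int_minus_neg)
qed

end
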